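(* Let $3\le k\le n-1$. If $T$ is a tree attaining the maximum value of $M_1$ over $\mathcal{CT}_{n,k}$, or a tree attaining the maximum value of $M_2$ over $\mathcal{CT}_{n,k}$, then $T$ contains at most two vertices of degree $3$.
   Context: A chemical tree is a tree with maximum degree at most $4$. A segment of a tree is a path of positive length neither of whose end vertices has degree $2$ and all of whose internal vertices have degree $2$. $\mathcal{CT}_{n,k}$ is the class of all $n$-vertex chemical trees with exactly $k$ segments. $M_1(G)=\sum_{v}d_v^2$ and $M_2(G)=\sum_{uv\in E(G)}d_ud_v$, where $d_v$ is the degree of $v$. *)

theory Defs
  imports Main
begin

definition is_graph :: "nat \<Rightarrow> nat set set \<Rightarrow> bool" where
  "is_graph n E \<longleftrightarrow> (\<forall>e\<in>E. e \<subseteq> {..<n} \<and> card e = 2)"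

definition deg :: "nat set set \<Rightarrow> nat \<Rightarrow> nat" where
  "deg E v = card {e\<in>E. v \<in> e}"

definition adj :: "nat set set \<Rightarrow> (nat \<times> nat) set" where
  "adj E = {(u, v). {u, v} \<in> E}"

definition is_tree :: "nat \<Rightarrow> nat set set \<Rightarrow> bool" where
  "is_tree n E \<longleftrightarrow> is_graph n E \<and> n \<ge> 1 \<and> card E = n - 1 \<and>
     (\<forall>u\<in>{..<n}. \<forall>v\<in>{..<n}. (u, v) \<in> (adj E)\<^sup>*)"

definition chemical_tree :: "nat \<Rightarrow> nat set set \<Rightarrow> bool" where
  "chemical_tree n E \<longleftrightarrow> is_tree n E \<and> (\<forall>v\<in>{..<n}. deg E v \<le> 4)"

definition segment_path :: "nat \<Rightarrow> nat set set \<Rightarrow> nat list \<Rightarrow> bool" where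
  "segment_path n E p \<longleftrightarrow> length p \<ge> 2 \<and> distinct p \<and> set p \<subseteq> {..<n} \<and>
     (\<forall>i. Suc i < length p \<longrightarrow> {p ! i, p ! Suc i} \<in> E) \<and>
     deg E (hd p) \<noteq> 2 \<and> deg E (last p) \<noteq> 2 \<and>
     (\<forall>i. 0 < i \<and> Suc i < length p \<longrightarrow> deg E (p ! i) = 2)"

definition path_edges :: "nat list \<Rightarrow> nat set set" where
  "path_edges p = {{p ! i, p ! Suc i} | i. Suc i < length p}"

text \<open>Segments are identified with their edge sets (so a path and its reversal coincide).\<close>
definition segments :: "nat \<Rightarrow> nat set set \<Rightarrow> nat set set set" where
  "segments n E = path_edges ` {p. segment_path n E p}"

definition CT :: "nat \<Rightarrow> nat \<Rightarrow> nat set set set" where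
  "CT n k = {E. chemical_tree n E \<and> card (segments n E) = k}"

definition M1 :: "nat \<Rightarrow> nat set set \<Rightarrow> nat" where
  "M1 n E = (\<Sum>v\<in>{..<n}. (deg E v)\<^sup>2)"

definition M2 :: "nat set set \<Rightarrow> nat" where
  "M2 E = (\<Sum>e\<in>E. \<Prod>v\<in>e. deg E v)"

end

theory Submission
  imports Defs
begin

text \<open>Suppose a maximal tree \<open>T\<close> had three vertices of degree 3. Of three vertices, one of
  them, \<open>x\<close>, does not separate the other two, \<open>y1\<close> and \<open>y2\<close>. Let \<open>b\<close>, \<open>c\<close> be the two
  neighbours of \<open>x\<close> that do not lead towards \<open>y1\<close>, \<open>y2\<close>, and replace the edges \<open>xb\<close>, \<open>xc\<close>
  by \<open>y1b\<close>, \<open>y2c\<close>. The result is again a chemical tree, in which the degrees of \<open>x\<close>, \<open>y1\<close>,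
  \<open>y2\<close> have changed from 3, 3, 3 to 1, 4, 4 and all other degrees are unchanged. As no vertex
  gains or loses degree 2, moving an end \<open>x\<close> of a segment to \<open>y1\<close> or \<open>y2\<close> (and back) is a
  bijection between the segments of the two trees. But \<open>M1\<close> grows by 6 and \<open>M2\<close> grows as
  well, contradicting maximality.\<close>

lemma in_adj_iff [simp]: "(u, v) \<in> adj E \<longleftrightarrow> {u, v} \<in> E"
  by (simp add: adj_def)

lemma sym_adj: "sym (adj E)"
  by (auto simp: sym_def insert_commute)

lemma reach_sym: "(u, v) \<in> (adj E)\<^sup>* \<Longrightarrow> (v, u) \<in> (adj E)\<^sup>*"
  using sym_rtrancl[OF sym_adj] by (auto simp: sym_def)

lemma reach_mono:
  assumes "E \<subseteq> F" "(u, v) \<in> (adj E)\<^sup>*"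
  shows "(u, v) \<in> (adj F)\<^sup>*"
proof -
  have "adj E \<subseteq> adj F" using assms(1) by (auto simp: adj_def)
  then show ?thesis using assms(2) rtrancl_mono by blast
qed

lemma reach_step: "(u, w) \<in> (adj E)\<^sup>* \<Longrightarrow> {w, v} \<in> E \<Longrightarrow> (u, v) \<in> (adj E)\<^sup>*"
  by (simp add: rtrancl_into_rtrancl)

lemma reach_insert_edge:
  "(u, v) \<in> (adj (insert {s, t} F))\<^sup>* \<Longrightarrow>
   (u, v) \<in> (adj F)\<^sup>* \<or> (u, s) \<in> (adj F)\<^sup>* \<or> (u, t) \<in> (adj F)\<^sup>*"
proof (induction rule: rtrancl_induct)
  case (step y z)
  then have "{y, z} = {s, t} \<or> {y, z} \<in> F" by simp
  then show ?case
  proof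
    assume "{y, z} = {s, t}"
    then show ?thesis using step.IH by (auto simp: doubleton_eq_iff)
  qed (use step.IH reach_step in blast)
qed simp

lemma card_le_card_edges_add_card:
  assumes "finite F" "\<forall>e\<in>F. \<exists>s t. e = {s, t}" "finite S"
    "\<forall>v\<in>V. \<exists>z\<in>S. (v, z) \<in> (adj F)\<^sup>*"
  shows "card V \<le> card F + card S"
  using assms
proof (induction F arbitrary: S rule: finite_induct)
  case empty
  then have "V \<subseteq> S" by (auto simp: adj_def)
  then show ?case using card_mono[OF empty.prems(2)] by simp
next
  case (insert e F)
  obtain s t where e: "e = {s, t}" using insert.prems(1) by blast
  have edges: "\<forall>e\<in>F. \<exists>s t. e = {s, t}" using insert.prems(1) by blast
  have card_insert_e: "card (insert e F) = Suc (card F)" using insert.hyps by simp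
  show ?case
  proof (cases "\<exists>w\<in>{s, t}. \<exists>z\<in>S. (w, z) \<in> (adj F)\<^sup>*")
    case True
    then obtain w w' z where ww': "{s, t} = {w, w'}" "z \<in> S" "(w, z) \<in> (adj F)\<^sup>*"
      by (auto simp: insert_commute)
    have "\<forall>v\<in>V. \<exists>z\<in>insert w' S. (v, z) \<in> (adj F)\<^sup>*"
    proof
      fix v assume "v \<in> V"
      then obtain z' where "z' \<in> S" "(v, z') \<in> (adj (insert {w, w'} F))\<^sup>*"
        using insert.prems(3) e ww'(1) by auto
      then show "\<exists>z\<in>insert w' S. (v, z) \<in> (adj F)\<^sup>*"
        using reach_insert_edge ww'(2,3) by (meson insertCI rtrancl_trans)
    qed
    then have "card V \<le> card F + card (insert w' S)"
      using insert.IH[OF edges] insert.prems(2) by blast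
    then show ?thesis using card_insert_e card_insert_le_m1 insert.prems(2)
      by (simp add: card_insert_if split: if_splits)
  next
    case False
    have "\<forall>v\<in>V. \<exists>z\<in>S. (v, z) \<in> (adj F)\<^sup>*"
    proof
      fix v assume "v \<in> V"
      then obtain z where "z \<in> S" "(z, v) \<in> (adj (insert {s, t} F))\<^sup>*"
        using insert.prems(3) e reach_sym by blast
      then show "\<exists>z\<in>S. (v, z) \<in> (adj F)\<^sup>*"
        using reach_insert_edge False reach_sym by blast
    qed
    then show ?thesis using insert.IH[OF edges] insert.prems(2) card_insert_e by fastforce
  qed
qed

lemma reach_avoiding_neq:
  "(y, w) \<in> (adj {e\<in>T. x \<notin> e})\<^sup>* \<Longrightarrow> y \<noteq> x \<Longrightarrow> w \<noteq> x"
  by (induction rule: rtrancl_induct) auto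

lemma reach_avoiding_one_of_two:
  assumes "(u2, z) \<in> (adj T)\<^sup>*" "u1 \<noteq> u2"
  shows "(u1, z) \<in> (adj {e\<in>T. u2 \<notin> e})\<^sup>* \<or> (u2, z) \<in> (adj {e\<in>T. u1 \<notin> e})\<^sup>*"
  using assms(1)
proof (induction rule: rtrancl_induct)
  case (step w z)
  then have wz: "{w, z} \<in> T" by simp
  show ?case
  proof (cases "z = u1 \<or> z = u2")
    case False
    then show ?thesis
      using step.IH wz assms(2) reach_step[of _ w _ z] by (cases "w = u1 \<or> w = u2") auto
  qed auto
qed simp

lemma reach_neighbour_avoiding:
  assumes "(y, x) \<in> (adj T)\<^sup>*" "y \<noteq> x"
  shows "\<exists>a. {a, x} \<in> T \<and> (y, a) \<in> (adj {e\<in>T. x \<notin> e})\<^sup>*"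
proof -
  have "(y, z) \<in> (adj {e\<in>T. x \<notin> e})\<^sup>* \<or> (\<exists>a. {a, x} \<in> T \<and> (y, a) \<in> (adj {e\<in>T. x \<notin> e})\<^sup>*)"
    if "(y, z) \<in> (adj T)\<^sup>*" for z
    using that
  proof (induction rule: rtrancl_induct)
    case (step w z)
    then show ?case
      using reach_avoiding_neq[of y w T x] reach_step[of y w _ z] assms(2) by fastforce
  qed simp
  then show ?thesis using assms reach_avoiding_neq by blast
qed

lemma deg_insert:
  "finite A \<Longrightarrow> e \<notin> A \<Longrightarrow> deg (insert e A) v = deg A v + of_bool (v \<in> e)"
proof -
  assume "finite A" "e \<notin> A"
  moreover have "{e'\<in>insert e A. v \<in> e'}
      = (if v \<in> e then insert e {e'\<in>A. v \<in> e'} else {e'\<in>A. v \<in> e'})"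
    by auto
  ultimately show ?thesis unfolding deg_def by simp
qed

lemma sum_of_bool_mem_eq_deg: "finite A \<Longrightarrow> (\<Sum>e\<in>A. of_bool (v \<in> e)) = of_nat (deg A v)"
  by (simp add: deg_def Int_def)

lemma deg_pos: "finite T \<Longrightarrow> e \<in> T \<Longrightarrow> v \<in> e \<Longrightarrow> 0 < deg T v"
  unfolding deg_def by (auto simp: card_gt_0_iff)

lemma two_le_deg:
  assumes "finite T" "e \<in> T" "e' \<in> T" "e \<noteq> e'" "v \<in> e" "v \<in> e'"
  shows "2 \<le> deg T v"
proof -
  have "card {e, e'} \<le> deg T v"
    unfolding deg_def using assms by (intro card_mono) auto
  then show ?thesis using assms(4) by simp
qed

lemma deg3_other_neighbours:
  assumes "finite T" "\<forall>e\<in>T. card e = 2" "deg T x = 3" "{a, x} \<in> T"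
  shows "\<exists>b c. {x, b} \<in> T \<and> {x, c} \<in> T \<and> b \<noteq> c \<and> b \<noteq> a \<and> c \<noteq> a"
proof -
  have "card ({e\<in>T. x \<in> e} - {{a, x}}) = 2"
    using assms unfolding deg_def by (subst card_Diff_singleton) auto
  then obtain e1 e2 where e12: "{e\<in>T. x \<in> e} - {{a, x}} = {e1, e2}" "e1 \<noteq> e2"
    by (auto simp: card_2_iff)
  have "\<exists>b. e = {x, b} \<and> b \<noteq> a" if "e \<in> {e1, e2}" for e
  proof -
    have "e \<in> T" "x \<in> e" "e \<noteq> {a, x}" using that e12(1) by blast+
    moreover obtain p q where "e = {p, q}"
      using assms(2) \<open>e \<in> T\<close> by (auto simp: card_2_iff)
    ultimately obtain b where "e = {x, b}" by (metis insertE insert_commute singletonD)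
    moreover have "b \<noteq> a" using \<open>e \<noteq> {a, x}\<close> calculation by (metis insert_commute)
    ultimately show ?thesis by blast
  qed
  then obtain b c where "e1 = {x, b}" "e2 = {x, c}" "b \<noteq> a" "c \<noteq> a"
    by (metis insertCI)
  then show ?thesis using e12 by auto
qed

lemma exists_nonleaf_neighbour:
  assumes "finite T" "(y, x) \<in> (adj T)\<^sup>*" "y \<noteq> x" "2 \<le> deg T x"
  shows "\<exists>a. {y, a} \<in> T \<and> 2 \<le> deg T a"
proof -
  obtain a where a: "{a, y} \<in> T" "(x, a) \<in> (adj {e\<in>T. y \<notin> e})\<^sup>*"
    using reach_neighbour_avoiding[OF reach_sym[OF assms(2)]] assms(3) by blast
  have "2 \<le> deg T a"
  proof (cases "x = a")
    case False
    then obtain w where "(w, a) \<in> adj {e\<in>T. y \<notin> e}"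
      using a(2) by (metis rtranclE)
    then have "{w, a} \<in> T" "y \<notin> {w, a}" by auto
    then show ?thesis using two_le_deg[OF assms(1) a(1)] by blast
  qed (use assms(4) in simp)
  then show ?thesis using a(1) by (auto simp: insert_commute)
qed

lemma path_reach:
  assumes "\<forall>t. i \<le> t \<and> t < j \<longrightarrow> {p ! t, p ! Suc t} \<in> F" "i \<le> j"
  shows "(p ! i, p ! j) \<in> (adj F)\<^sup>*"
  using assms
proof (induction j)
  case (Suc j)
  then show ?case by (cases "i = Suc j") (auto intro: reach_step)
qed simp

lemma segment_path_nondeg2_index:
  assumes "segment_path n E p" "i < length p" "deg E (p ! i) \<noteq> 2"
  shows "i = 0 \<or> i = length p - 1"
proof (rule ccontr)
  assume "\<not> (i = 0 \<or> i = length p - 1)"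
  then have "0 < i \<and> Suc i < length p" using assms(2) by auto
  then show False using assms unfolding segment_path_def by blast
qed

lemma segment_path_reach_avoiding:
  assumes sp: "segment_path n E p" and ij: "i \<le> j" "j < length p" and "p ! i \<notin> X" "p ! j \<notin> X"
    and X: "\<forall>v\<in>X. deg E v \<noteq> 2"
  shows "(p ! i, p ! j) \<in> (adj {e\<in>E. e \<inter> X = {}})\<^sup>*"
proof (rule path_reach)
  have "p ! t \<notin> X" if "i \<le> t" "t \<le> j" for t
  proof (cases "t = i \<or> t = j")
    case False
    then have "0 < t" "t \<noteq> length p - 1" "t < length p" using that ij by auto
    then show ?thesis using segment_path_nondeg2_index[OF sp, of t] X by auto
  qed (use assms in auto)
  then show "\<forall>t. i \<le> t \<and> t < j \<longrightarrow> {p ! t, p ! Suc t} \<in> {e\<in>E. e \<inter> X = {}}"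
    using sp ij unfolding segment_path_def by auto
qed fact

lemma segment_path_edge_at_nondeg2:
  assumes sp: "segment_path n E p" and "e \<in> path_edges p" "v \<in> e" "deg E v \<noteq> 2"
  shows "(v = p ! 0 \<and> e = {p ! 0, p ! 1}) \<or>
    (v = p ! (length p - 1) \<and> e = {p ! (length p - 2), p ! (length p - 1)})"
proof -
  obtain i where i: "e = {p ! i, p ! Suc i}" "Suc i < length p"
    using assms(2) by (auto simp: path_edges_def)
  then consider "v = p ! i" | "v = p ! Suc i" using assms(3) by auto
  then show ?thesis
  proof cases
    case 1
    then have "i = 0" using segment_path_nondeg2_index[OF sp, of i] i(2) assms(4) by auto
    then show ?thesis using 1 i by simp
  next
    case 2
    then have "Suc i = length p - 1"
      using segment_path_nondeg2_index[OF sp, of "Suc i"] i(2) assms(4) by auto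
    then have "i = length p - 2" by simp
    then show ?thesis using 2 i \<open>Suc i = length p - 1\<close> by simp
  qed
qed

lemma segment_path_edges_at_nondeg2_eq:
  assumes sp: "segment_path n E p" and "e \<in> path_edges p" "e' \<in> path_edges p"
    and "v \<in> e" "v \<in> e'" "deg E v \<noteq> 2"
  shows "e = e'"
proof -
  have "distinct p" "2 \<le> length p" using sp by (auto simp: segment_path_def)
  then have "p ! 0 \<noteq> p ! (length p - 1)" by (subst nth_eq_iff_index_eq) auto
  then show ?thesis
    using segment_path_edge_at_nondeg2[OF sp assms(2,4,6)]
      segment_path_edge_at_nondeg2[OF sp assms(3,5,6)] by auto
qed

lemma segment_path_edge_end:
  assumes sp: "segment_path n E p" and "{v, b} \<in> path_edges p" "deg E v \<noteq> 2" "v \<noteq> b"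
  shows "(p ! 0 = v \<and> p ! 1 = b) \<or> (p ! (length p - 1) = v \<and> p ! (length p - 2) = b)"
  using segment_path_edge_at_nondeg2[OF sp assms(2) _ assms(3)] assms(4)
  by (auto simp: doubleton_eq_iff)

lemma segment_path_reach_from_end:
  assumes sp: "segment_path n E p" and X: "\<forall>v\<in>X. deg E v \<noteq> 2"
    and xb: "{x, b} \<in> path_edges p" "x \<in> X" "b \<notin> X"
    and y: "y \<in> set p" "y \<notin> X" "deg E y \<noteq> 2"
  shows "(b, y) \<in> (adj {e\<in>E. e \<inter> X = {}})\<^sup>*"
proof -
  let ?L = "length p"
  obtain k where k: "k < ?L" "p ! k = y" using y(1) by (auto simp: in_set_conv_nth)
  have L: "2 \<le> ?L" using sp by (simp add: segment_path_def)
  have "k = 0 \<or> k = ?L - 1" using segment_path_nondeg2_index[OF sp k(1)] k(2) y(3) by simp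
  moreover have "(p ! 0 = x \<and> p ! 1 = b) \<or> (p ! (?L - 1) = x \<and> p ! (?L - 2) = b)"
    using segment_path_edge_end[OF sp xb(1)] X xb by auto
  ultimately consider "p ! 1 = b" "k = ?L - 1" | "p ! (?L - 2) = b" "k = 0"
    using k(2) xb(2) y(2) by auto
  then show ?thesis
  proof cases
    case 1
    then show ?thesis
      using segment_path_reach_avoiding[OF sp, of 1 k X] k L xb y X by simp
  next
    case 2
    then show ?thesis
      using segment_path_reach_avoiding[OF sp, of k "?L - 2" X] k L xb y X reach_sym by auto
  qed
qed

lemma segment_path_reach_between_ends:
  assumes sp: "segment_path n E p" and X: "\<forall>v\<in>X. deg E v \<noteq> 2"
    and "{x1, b1} \<in> path_edges p" "{x2, b2} \<in> path_edges p"
    and "x1 \<in> X" "x2 \<in> X" "x1 \<noteq> x2" "b1 \<notin> X" "b2 \<notin> X"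
  shows "(b1, b2) \<in> (adj {e\<in>E. e \<inter> X = {}})\<^sup>*"
proof -
  let ?L = "length p"
  have "(p ! 0 = x1 \<and> p ! 1 = b1 \<and> p ! (?L - 1) = x2 \<and> p ! (?L - 2) = b2) \<or>
        (p ! 0 = x2 \<and> p ! 1 = b2 \<and> p ! (?L - 1) = x1 \<and> p ! (?L - 2) = b1)"
    using segment_path_edge_end[OF sp assms(3)] segment_path_edge_end[OF sp assms(4)] assms by auto
  moreover have "2 \<le> ?L" using sp by (simp add: segment_path_def)
  moreover from calculation have "1 \<le> ?L - 2" "?L - 2 < ?L"
    using assms(5,6,8,9) by (cases "?L = 2", auto)
  ultimately show ?thesis
    using segment_path_reach_avoiding[OF sp, of 1 "?L - 2" X] assms(8,9) X reach_sym by auto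
qed

lemma path_edges_map: "path_edges (map \<sigma> p) = image \<sigma> ` path_edges p"
proof -
  have "{map \<sigma> p ! i, map \<sigma> p ! Suc i} = \<sigma> ` {p ! i, p ! Suc i}" if "Suc i < length p" for i
    using that by simp
  then show ?thesis
    unfolding path_edges_def length_map image_Collect by (intro Collect_cong) metis
qed

lemma segment_path_map:
  assumes sp: "segment_path n E p" and "inj_on \<sigma> (set p)" "\<sigma> ` set p \<subseteq> {..<n}"
    and "\<And>i. Suc i < length p \<Longrightarrow> {\<sigma> (p ! i), \<sigma> (p ! Suc i)} \<in> E'"
    and "\<And>v. v \<in> set p \<Longrightarrow> deg E' (\<sigma> v) = 2 \<longleftrightarrow> deg E v = 2"
  shows "segment_path n E' (map \<sigma> p)"
proof -
  have "p \<noteq> []" using sp by (auto simp: segment_path_def)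
  then have "hd p \<in> set p" "last p \<in> set p" "hd (map \<sigma> p) = \<sigma> (hd p)" "last (map \<sigma> p) = \<sigma> (last p)"
    by (auto simp: hd_map last_map)
  then show ?thesis
    using assms unfolding segment_path_def by (auto simp: distinct_map)
qed

lemma segments_reroute:
  fixes E0 :: "nat set set" and x1 x2 y1 y2 b1 b2 :: nat
  defines "E \<equiv> insert {x1, b1} (insert {x2, b2} E0)"
    and "E' \<equiv> insert {y1, b1} (insert {y2, b2} E0)"
  assumes deg2: "\<And>v. deg E' v = 2 \<longleftrightarrow> deg E v = 2"
    and nondeg2: "deg E x1 \<noteq> 2" "deg E x2 \<noteq> 2" "deg E y1 \<noteq> 2" "deg E y2 \<noteq> 2"
    and ne: "y1 \<notin> {x1, x2}" "y2 \<notin> {x1, x2}" "b1 \<notin> {x1, x2}" "b2 \<notin> {x1, x2}" "b1 \<noteq> b2"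
    and yn: "y1 < n" "y2 < n"
    and sep: "(b1, y1) \<notin> (adj E0)\<^sup>*" "(b2, y2) \<notin> (adj E0)\<^sup>*" "y1 = y2 \<Longrightarrow> (b1, b2) \<notin> (adj E0)\<^sup>*"
    and S: "S \<in> segments n E"
  shows "id({x1, b1} := {y1, b1}, {x2, b2} := {y2, b2}) ` S \<in> segments n E'"
proof -
  obtain p where sp: "segment_path n E p" and S_eq: "S = path_edges p"
    using S unfolding segments_def by blast
  define P1 where "P1 \<longleftrightarrow> {x1, b1} \<in> path_edges p"
  define P2 where "P2 \<longleftrightarrow> {x2, b2} \<in> path_edges p"
  \<comment> \<open>\<open>\<sigma>\<close> moves the end \<open>x1\<close> (\<open>x2\<close>) of \<open>p\<close> to \<open>y1\<close> (\<open>y2\<close>) if \<open>p\<close> uses the edge \<open>{x1, b1}\<close>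
    (\<open>{x2, b2}\<close>); the separation hypotheses keep the moved path simple.\<close>
  define \<sigma> where "\<sigma> v = (if v = x1 \<and> P1 then y1 else if v = x2 \<and> P2 then y2 else v)" for v
  define g where "g = id({x1, b1} := {y1, b1}, {x2, b2} := {y2, b2})"
  have avoid_E0: "(u, v) \<in> (adj E0)\<^sup>*" if "(u, v) \<in> (adj {e\<in>E. e \<inter> {x1, x2} = {}})\<^sup>*" for u v
    using reach_mono[OF _ that] unfolding E_def by auto
  have y1_notin: "y1 \<notin> set p" if P1
    using segment_path_reach_from_end[OF sp, of "{x1, x2}" x1 b1 y1] avoid_E0 that ne nondeg2 sep
    unfolding P1_def by auto
  have y2_notin: "y2 \<notin> set p" if P2
    using segment_path_reach_from_end[OF sp, of "{x1, x2}" x2 b2 y2] avoid_E0 that ne nondeg2 sep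
    unfolding P2_def by auto
  have y1_neq_y2: "y1 \<noteq> y2" if P1 P2 "x1 \<noteq> x2"
    using segment_path_reach_between_ends[OF sp, of "{x1, x2}" x1 b1 x2 b2] avoid_E0 that ne
      nondeg2 sep
    unfolding P1_def P2_def by auto
  have not_both: "\<not> (P1 \<and> P2)" if "x1 = x2"
  proof
    assume "P1 \<and> P2"
    then have "{x1, b1} = {x1, b2}"
      using segment_path_edges_at_nondeg2_eq[OF sp, of "{x1, b1}" "{x1, b2}" x1] that nondeg2
      unfolding P1_def P2_def by simp
    then show False using ne by (auto simp: doubleton_eq_iff)
  qed
  have \<sigma>_edge: "\<sigma> ` {p ! i, p ! Suc i} = g {p ! i, p ! Suc i} \<and> g {p ! i, p ! Suc i} \<in> E'"
    if "Suc i < length p" for i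
  proof -
    define e where "e = {p ! i, p ! Suc i}"
    have e: "e \<in> path_edges p" "e \<in> E"
      using that sp unfolding e_def path_edges_def segment_path_def by auto
    have g12: "{x1, b1} \<noteq> {x2, b2}" using ne by (auto simp: doubleton_eq_iff)
    consider "e = {x1, b1}" | "e = {x2, b2}" | "e \<notin> {{x1, b1}, {x2, b2}}" by blast
    then have "\<sigma> ` e = g e \<and> g e \<in> E'"
    proof cases
      case 1
      then show ?thesis using e(1) ne g12 unfolding \<sigma>_def g_def P1_def E'_def by auto
    next
      case 2
      then have "\<not> (x2 = x1 \<and> P1)" using e(1) not_both unfolding P2_def by auto
      then show ?thesis using 2 e(1) ne g12 unfolding \<sigma>_def g_def P2_def E'_def by auto
    next
      case 3
      have "\<sigma> w = w" if "w \<in> e" for w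
        using segment_path_edges_at_nondeg2_eq[OF sp e(1), of "{x1, b1}" w]
          segment_path_edges_at_nondeg2_eq[OF sp e(1), of "{x2, b2}" w] that 3 nondeg2
        unfolding \<sigma>_def P1_def P2_def by auto
      then show ?thesis using 3 e(2) unfolding g_def E_def E'_def by auto
    qed
    then show ?thesis unfolding e_def .
  qed
  have "segment_path n E' (map \<sigma> p)"
  proof (rule segment_path_map[OF sp])
    have moved: "\<sigma> v \<notin> set p" if "\<sigma> v \<noteq> v" for v
      using that y1_notin y2_notin unfolding \<sigma>_def by (auto split: if_splits)
    have both_moved: "u = v" if "\<sigma> u = \<sigma> v" "\<sigma> u \<noteq> u" "\<sigma> v \<noteq> v" for u v
      using that y1_neq_y2 not_both unfolding \<sigma>_def by (auto split: if_splits)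
    show "inj_on \<sigma> (set p)"
      by (rule inj_onI) (metis moved both_moved)
    show "\<sigma> ` set p \<subseteq> {..<n}"
      using sp yn unfolding \<sigma>_def segment_path_def by auto
    show "{\<sigma> (p ! i), \<sigma> (p ! Suc i)} \<in> E'" if "Suc i < length p" for i
      using \<sigma>_edge[of i] that by simp
    show "deg E' (\<sigma> v) = 2 \<longleftrightarrow> deg E v = 2" for v
      using deg2 nondeg2 unfolding \<sigma>_def by auto
  qed
  moreover have "path_edges (map \<sigma> p) = g ` S"
    unfolding path_edges_map S_eq
    by (rule image_cong) (use \<sigma>_edge in \<open>auto simp: path_edges_def\<close>)
  ultimately show ?thesis unfolding segments_def g_def by blast
qed

lemma card_segments_le:
  assumes "inj_on g E" "finite E'" "image g ` segments n E \<subseteq> segments n E'"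
  shows "card (segments n E) \<le> card (segments n E')"
proof -
  have segments_Pow: "segments n F \<subseteq> Pow F" for F
    unfolding segments_def segment_path_def path_edges_def by auto
  have "inj_on (image g) (segments n E)"
    using inj_on_image_Pow[OF assms(1)] segments_Pow by (rule inj_on_subset)
  then have "card (segments n E) = card (image g ` segments n E)"
    by (simp add: card_image)
  also have "\<dots> \<le> card (segments n E')"
    using assms(2,3) segments_Pow[of E'] by (intro card_mono) (auto intro: finite_subset)
  finally show ?thesis .
qed

lemma inj_on_id_upd2: "a' \<notin> E \<Longrightarrow> c' \<notin> E \<Longrightarrow> a' \<noteq> c' \<Longrightarrow> inj_on (id(a := a', c := c')) E"
  by (intro inj_on_fun_updI) auto

lemma edge_weight_gain:
  fixes d d' :: "nat \<Rightarrow> nat"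
  assumes d': "\<And>z. d' z = (if z = x then 1 else if z = y1 \<or> z = y2 then 4 else d z)"
    and deg3: "d x = 3" "d y1 = 3" "d y2 = 3"
    and ne: "x \<noteq> y1" "x \<noteq> y2" "y1 \<noteq> y2" "u \<noteq> v"
    and bounds: "1 \<le> d u" "d u \<le> 4" "1 \<le> d v" "d v \<le> 4"
  shows "of_bool (y1 \<in> {u, v}) + of_bool (y2 \<in> {u, v}) - 8 * of_bool (x \<in> {u, v})
      + of_bool (y1 \<in> {u, v} \<and> (\<forall>z\<in>{u, v}. 2 \<le> d z))
    \<le> int (d' u * d' v) - int (d u * d v)"
  using assms by (auto simp: d')

lemma chemical_tree_edge: "chemical_tree n T \<Longrightarrow> e \<in> T \<Longrightarrow> e \<subseteq> {..<n} \<and> card e = 2"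
  unfolding chemical_tree_def is_tree_def is_graph_def by blast

lemma chemical_tree_finite: "chemical_tree n T \<Longrightarrow> finite T"
  using chemical_tree_edge by (intro finite_subset[of T "Pow {..<n}"]) auto

lemma chemical_tree_connected: "chemical_tree n T \<Longrightarrow> u < n \<Longrightarrow> v < n \<Longrightarrow> (u, v) \<in> (adj T)\<^sup>*"
  unfolding chemical_tree_def is_tree_def by blast

locale rerouting =
  fixes n :: nat and T :: "nat set set" and x y1 y2 b c :: nat
  assumes chemical: "chemical_tree n T"
    and distinct: "x \<noteq> y1" "x \<noteq> y2" "y1 \<noteq> y2"
    and deg3: "deg T x = 3" "deg T y1 = 3" "deg T y2 = 3"
    and edges: "{x, b} \<in> T" "{x, c} \<in> T" "b \<noteq> c"
    and reach_x: "(y1, x) \<in> (adj (T - {{x, b}, {x, c}}))\<^sup>*"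
      "(y2, x) \<in> (adj (T - {{x, b}, {x, c}}))\<^sup>*"
begin

definition E0 :: "nat set set" where
  "E0 = T - {{x, b}, {x, c}}"

definition T' :: "nat set set" where
  "T' = insert {y1, b} (insert {y2, c} E0)"

lemmas T_edge = chemical_tree_edge[OF chemical]
lemmas finite_T = chemical_tree_finite[OF chemical]
lemmas connected = chemical_tree_connected[OF chemical]

lemma finite_E0: "finite E0"
  using finite_T by (simp add: E0_def)

lemma in_range: "x < n" "y1 < n" "y2 < n" "b < n" "c < n"
proof -
  show "x < n" "b < n" "c < n" using T_edge edges by auto
  have "\<exists>e\<in>T. v \<in> e" if "deg T v = 3" for v
  proof (rule ccontr)
    assume "\<not> (\<exists>e\<in>T. v \<in> e)"
    then have "{e\<in>T. v \<in> e} = {}" by blast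
    then show False using that unfolding deg_def by (metis card.empty zero_neq_numeral)
  qed
  then show "y1 < n" "y2 < n" using deg3 T_edge by blast+
qed

lemma b_c_neq_x: "b \<noteq> x" "c \<noteq> x"
  using T_edge[OF edges(1)] T_edge[OF edges(2)] by auto

lemma T_split: "T = insert {x, b} (insert {x, c} E0)" "{x, b} \<notin> E0" "{x, c} \<notin> E0" "{x, b} \<noteq> {x, c}"
  using edges by (auto simp: E0_def doubleton_eq_iff)

lemma card_E0: "card E0 + 3 = n"
proof -
  have "card T = n - 1" "1 \<le> n" using chemical unfolding chemical_tree_def is_tree_def by auto
  moreover have "card (insert {x, b} (insert {x, c} E0)) = card E0 + 2"
    using T_split(2-4) finite_E0 by simp
  ultimately show ?thesis using T_split(1) by simp
qed

lemma E0_reach_x_b_c: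
  assumes "v < n"
  shows "\<exists>z\<in>{x, b, c}. (v, z) \<in> (adj E0)\<^sup>*"
proof -
  have "(v, x) \<in> (adj (insert {x, b} (insert {x, c} E0)))\<^sup>*"
    using connected in_range assms T_split(1) by simp
  then have "(v, x) \<in> (adj (insert {x, c} E0))\<^sup>* \<or> (v, b) \<in> (adj (insert {x, c} E0))\<^sup>*"
    using reach_insert_edge by blast
  then show ?thesis using reach_insert_edge[of v _ x c E0] by blast
qed

lemma E0_separates:
  assumes "u \<in> {x, b, c}" "w \<in> {x, b, c}" "u \<noteq> w"
  shows "(u, w) \<notin> (adj E0)\<^sup>*"
proof
  \<comment> \<open>\<open>E0\<close> has \<open>n - 3\<close> edges, so it has at least three components.\<close>
  assume uw: "(u, w) \<in> (adj E0)\<^sup>*"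
  have "\<forall>v\<in>{..<n}. \<exists>z\<in>{x, b, c} - {u}. (v, z) \<in> (adj E0)\<^sup>*"
    using E0_reach_x_b_c uw assms(2,3) by (metis Diff_iff lessThan_iff rtrancl_trans singletonD)
  moreover have "\<forall>e\<in>E0. \<exists>s t. e = {s, t}"
    using T_edge by (auto simp: E0_def card_2_iff)
  ultimately have "card {..<n} \<le> card E0 + card ({x, b, c} - {u})"
    using finite_E0 by (intro card_le_card_edges_add_card) auto
  moreover have "card ({x, b, c} - {u}) \<le> 2"
    using assms(1) by (auto simp: card_insert_if)
  ultimately show False using card_E0 by simp
qed

lemma E0_reach_y_x: "(y1, x) \<in> (adj E0)\<^sup>*" "(y2, x) \<in> (adj E0)\<^sup>*"
  using reach_x by (simp_all add: E0_def)

lemma E0_b_c_not_reach_y: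
  "(b, y1) \<notin> (adj E0)\<^sup>*" "(b, y2) \<notin> (adj E0)\<^sup>*" "(c, y1) \<notin> (adj E0)\<^sup>*" "(c, y2) \<notin> (adj E0)\<^sup>*"
proof -
  have "(b, x) \<notin> (adj E0)\<^sup>*" "(c, x) \<notin> (adj E0)\<^sup>*"
    using E0_separates b_c_neq_x by simp_all
  then show "(b, y1) \<notin> (adj E0)\<^sup>*" "(b, y2) \<notin> (adj E0)\<^sup>*" "(c, y1) \<notin> (adj E0)\<^sup>*"
    "(c, y2) \<notin> (adj E0)\<^sup>*"
    using E0_reach_y_x by (meson rtrancl_trans)+
qed

lemma b_c_neq_y: "b \<noteq> y1" "b \<noteq> y2" "c \<noteq> y1" "c \<noteq> y2"
  using E0_b_c_not_reach_y by auto

lemma new_edges: "{y1, b} \<notin> E0" "{y2, c} \<notin> E0" "{y1, b} \<noteq> {y2, c}"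
  using E0_b_c_not_reach_y b_c_neq_y distinct
  by (auto simp: doubleton_eq_iff insert_commute dest: reach_step[OF rtrancl_refl])

lemma deg_T: "deg T v = deg E0 v + of_bool (v \<in> {x, b}) + of_bool (v \<in> {x, c})"
proof -
  have "deg (insert {x, b} (insert {x, c} E0)) v
      = deg E0 v + of_bool (v \<in> {x, b}) + of_bool (v \<in> {x, c})"
    using T_split(2-4) finite_E0 by (simp add: deg_insert)
  then show ?thesis using T_split(1) by simp
qed

lemma deg_E0: "deg E0 x = 1" "deg E0 y1 = 3" "deg E0 y2 = 3"
  using deg_T[of x] deg_T[of y1] deg_T[of y2] deg3 distinct b_c_neq_y b_c_neq_x by auto

lemma deg_T': "deg T' v = (if v = x then 1 else if v = y1 \<or> v = y2 then 4 else deg T v)"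
proof -
  have "deg T' v = deg E0 v + of_bool (v \<in> {y1, b}) + of_bool (v \<in> {y2, c})"
    using new_edges finite_E0 by (simp add: T'_def deg_insert)
  then show ?thesis using deg_T[of v] deg_E0 distinct b_c_neq_y b_c_neq_x by auto
qed

lemma chemical_T': "chemical_tree n T'"
proof -
  have graph: "is_graph n T'"
    using T_edge in_range b_c_neq_y unfolding is_graph_def T'_def E0_def by auto
  have "card T' = n - 1"
    using new_edges finite_E0 card_E0 unfolding T'_def by simp
  moreover have "(v, x) \<in> (adj T')\<^sup>*" if "v < n" for v
  proof -
    have E0_T': "E0 \<subseteq> T'" and "{b, y1} \<in> T'" "{c, y2} \<in> T'" unfolding T'_def by auto
    moreover have "(y1, x) \<in> (adj T')\<^sup>*" "(y2, x) \<in> (adj T')\<^sup>*"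
      using E0_reach_y_x reach_mono[OF E0_T'] by auto
    ultimately have "(z, x) \<in> (adj T')\<^sup>*" if "z \<in> {x, b, c}" for z
      using that by (auto intro: converse_rtrancl_into_rtrancl)
    then show ?thesis using E0_reach_x_b_c[OF that] reach_mono[OF E0_T'] rtrancl_trans by metis
  qed
  then have "\<forall>u\<in>{..<n}. \<forall>v\<in>{..<n}. (u, v) \<in> (adj T')\<^sup>*"
    using reach_sym rtrancl_trans by (metis lessThan_iff)
  moreover have "\<forall>v\<in>{..<n}. deg T' v \<le> 4"
    using chemical deg_T' unfolding chemical_tree_def by simp
  ultimately show ?thesis
    using graph card_E0 unfolding chemical_tree_def is_tree_def by auto
qed

lemma card_segments_T': "card (segments n T') = card (segments n T)"
proof -
  have deg2: "deg T' v = 2 \<longleftrightarrow> deg T v = 2" for v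
    using deg_T' deg3 by auto
  have new_notin: "{y1, b} \<notin> T" "{y2, c} \<notin> T"
    using new_edges distinct b_c_neq_y by (auto simp: E0_def doubleton_eq_iff)
  have old_notin: "{x, b} \<notin> T'" "{x, c} \<notin> T'"
    using T_split distinct b_c_neq_x by (auto simp: T'_def doubleton_eq_iff)
  have "card (segments n T) \<le> card (segments n T')"
  proof (rule card_segments_le)
    show "inj_on (id({x, b} := {y1, b}, {x, c} := {y2, c})) T"
      using new_notin new_edges(3) by (rule inj_on_id_upd2)
    show "finite T'" using finite_E0 by (simp add: T'_def)
    show "image (id({x, b} := {y1, b}, {x, c} := {y2, c})) ` segments n T \<subseteq> segments n T'"
    proof (intro subsetI, elim imageE, hypsubst)
      fix S assume S: "S \<in> segments n T"
      show "id({x, b} := {y1, b}, {x, c} := {y2, c}) ` S \<in> segments n T'"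
        by (rule segments_reroute[where ?x1.0 = x and ?x2.0 = x and ?y1.0 = y1 and ?y2.0 = y2
              and ?b1.0 = b and ?b2.0 = c and ?E0.0 = E0, folded T_split(1) T'_def])
          (use S deg2 deg3 distinct b_c_neq_x b_c_neq_y in_range E0_b_c_not_reach_y edges(3)
            in auto)
    qed
  qed
  moreover have "card (segments n T') \<le> card (segments n T)"
  proof (rule card_segments_le)
    show "inj_on (id({y1, b} := {x, b}, {y2, c} := {x, c})) T'"
      using old_notin T_split(4) by (rule inj_on_id_upd2)
    show "finite T" by (rule finite_T)
    show "image (id({y1, b} := {x, b}, {y2, c} := {x, c})) ` segments n T' \<subseteq> segments n T"
    proof (intro subsetI, elim imageE, hypsubst)
      fix S assume S: "S \<in> segments n T'"
      show "id({y1, b} := {x, b}, {y2, c} := {x, c}) ` S \<in> segments n T"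
        by (rule segments_reroute[where ?x1.0 = y1 and ?x2.0 = y2 and ?y1.0 = x and ?y2.0 = x
              and ?b1.0 = b and ?b2.0 = c and ?E0.0 = E0, folded T_split(1) T'_def])
          (use S deg2 deg3 distinct b_c_neq_x b_c_neq_y in_range E0_separates edges(3) in auto)
    qed
  qed
  ultimately show ?thesis by simp
qed

lemma M1_less: "M1 n T < M1 n T'"
proof -
  have "(deg T' v)\<^sup>2 + (if v = x then 8 else 0)
      = (deg T v)\<^sup>2 + (if v = y1 then 7 else 0) + (if v = y2 then 7 else 0)" for v
    using deg_T'[of v] deg3 distinct by auto
  then have "(\<Sum>v<n. (deg T' v)\<^sup>2 + (if v = x then 8 else 0))
      = (\<Sum>v<n. (deg T v)\<^sup>2 + (if v = y1 then 7 else 0) + (if v = y2 then 7 else 0))"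
    by simp
  then have "M1 n T' + 8 = M1 n T + 14"
    using in_range by (simp add: M1_def sum.distrib)
  then show ?thesis by simp
qed

lemma deg_bounds: "e \<in> T \<Longrightarrow> v \<in> e \<Longrightarrow> 1 \<le> deg T v \<and> deg T v \<le> 4"
  using deg_pos[OF finite_T] T_edge chemical unfolding chemical_tree_def by fastforce

lemma M2_less: "M2 T < M2 T'"
proof -
  let ?w = "\<lambda>e. \<Prod>v\<in>e. deg T v" and ?w' = "\<lambda>e. \<Prod>v\<in>e. deg T' v"
  have deg_b_c: "deg T' b = deg T b" "deg T' c = deg T c"
    using deg_T' b_c_neq_x b_c_neq_y by auto
  have "M2 T = sum ?w (insert {x, b} (insert {x, c} E0))"
    unfolding M2_def using T_split(1) by (rule arg_cong)
  also have "\<dots> = 3 * deg T b + 3 * deg T c + sum ?w E0"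
    using T_split(2-4) finite_E0 b_c_neq_x deg3 by simp
  finally have M2_T: "M2 T = 3 * deg T b + 3 * deg T c + sum ?w E0" .
  have M2_T': "M2 T' = 4 * deg T b + 4 * deg T c + sum ?w' E0"
    using new_edges finite_E0 b_c_neq_y deg_T' deg_b_c distinct unfolding M2_def T'_def by simp
  obtain a where a: "{y1, a} \<in> T" "2 \<le> deg T a"
    using exists_nonleaf_neighbour[OF finite_T connected[of y1 x]] in_range distinct deg3 by auto
  have a_E0: "{y1, a} \<in> E0"
    using a(1) distinct b_c_neq_y by (auto simp: E0_def doubleton_eq_iff)
  \<comment> \<open>\<open>h\<close> bounds the gain of each edge weight from below; its sum over \<open>E0\<close> is \<open>-1\<close>
    since \<open>x\<close>, \<open>y1\<close>, \<open>y2\<close> have degrees 1, 3, 3 in \<open>E0\<close> and \<open>y1\<close> has the non-leaf neighbour \<open>a\<close>.\<close>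
  define h :: "nat set \<Rightarrow> int" where
    "h e = of_bool (y1 \<in> e) + of_bool (y2 \<in> e) - 8 * of_bool (x \<in> e)
      + of_bool (y1 \<in> e \<and> (\<forall>z\<in>e. 2 \<le> deg T z))" for e
  have "h e \<le> int (?w' e) - int (?w e)" if e: "e \<in> E0" for e
  proof -
    have "e \<in> T" using e by (simp add: E0_def)
    moreover obtain u v where uv: "e = {u, v}" "u \<noteq> v"
      using T_edge[OF \<open>e \<in> T\<close>] by (auto simp: card_2_iff)
    ultimately show ?thesis
      using edge_weight_gain[OF deg_T' deg3 distinct uv(2)] deg_bounds[of e]
      unfolding h_def by simp
  qed
  then have "sum h E0 \<le> (\<Sum>e\<in>E0. int (?w' e) - int (?w e))"
    by (rule sum_mono)
  also have "\<dots> = int (sum ?w' E0) - int (sum ?w E0)"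
    by (simp add: sum_subtractf)
  finally have "sum h E0 \<le> int (sum ?w' E0) - int (sum ?w E0)" .
  moreover have "1 \<le> (\<Sum>e\<in>E0. of_bool (y1 \<in> e \<and> (\<forall>z\<in>e. 2 \<le> deg T z)) :: int)"
    using member_le_sum[OF a_E0, of "\<lambda>e. of_bool (y1 \<in> e \<and> (\<forall>z\<in>e. 2 \<le> deg T z)) :: int"]
      finite_E0 a(2) deg3 by simp
  then have "-1 \<le> sum h E0"
    using finite_E0 deg_E0 unfolding h_def
    by (simp add: sum.distrib sum_subtractf sum_distrib_left[symmetric] sum_of_bool_mem_eq_deg
        del: sum_of_bool_eq sum_mult_of_bool_eq)
  moreover have "1 \<le> deg T b" "1 \<le> deg T c"
    using deg_bounds edges by auto
  ultimately show ?thesis using M2_T M2_T' by linarith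
qed

end

lemma rerouting_exists:
  assumes chemical: "chemical_tree n T"
    and in_range: "x < n" "y1 < n"
    and distinct: "x \<noteq> y1" "x \<noteq> y2" "y1 \<noteq> y2"
    and deg3: "deg T x = 3" "deg T y1 = 3" "deg T y2 = 3"
    and y1_y2: "(y1, y2) \<in> (adj {e\<in>T. x \<notin> e})\<^sup>*"
  shows "\<exists>b c. rerouting n T x y1 y2 b c"
proof -
  let ?G = "{e\<in>T. x \<notin> e}"
  have "(y1, x) \<in> (adj T)\<^sup>*"
    using chemical_tree_connected[OF chemical] in_range by blast
  then obtain a where a: "{a, x} \<in> T" "(y1, a) \<in> (adj ?G)\<^sup>*"
    using reach_neighbour_avoiding distinct by blast
  then obtain b c where edges: "{x, b} \<in> T" "{x, c} \<in> T" "b \<noteq> c" and bc: "b \<noteq> a" "c \<noteq> a"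
    using deg3_other_neighbours[OF chemical_tree_finite[OF chemical] _ deg3(1)]
      chemical_tree_edge[OF chemical] by blast
  let ?E0 = "T - {{x, b}, {x, c}}"
  have "{a, x} \<noteq> {x, b}" "{a, x} \<noteq> {x, c}"
    using bc by (auto simp: doubleton_eq_iff)
  then have E0: "?G \<subseteq> ?E0" "{a, x} \<in> ?E0"
    using a(1) by auto
  have "(y, x) \<in> (adj ?E0)\<^sup>*" if "(y, a) \<in> (adj ?G)\<^sup>*" for y
    using reach_step[OF reach_mono[OF E0(1) that] E0(2)] .
  moreover have "(y2, a) \<in> (adj ?G)\<^sup>*"
    using reach_sym[OF y1_y2] a(2) by (rule rtrancl_trans)
  ultimately have "(y1, x) \<in> (adj ?E0)\<^sup>*" "(y2, x) \<in> (adj ?E0)\<^sup>*"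
    using a(2) by blast+
  then have "rerouting n T x y1 y2 b c"
    unfolding rerouting_def using chemical distinct deg3 edges by blast
  then show ?thesis by blast
qed

theorem lemma2:
  fixes n k :: nat and T :: "nat set set"
  assumes "3 \<le> k" and "k \<le> n - 1"
    and "T \<in> CT n k"
    and "(\<forall>T'\<in>CT n k. M1 n T' \<le> M1 n T) \<or> (\<forall>T'\<in>CT n k. M2 T' \<le> M2 T)"
  shows "card {v\<in>{..<n}. deg T v = 3} \<le> 2"
proof (rule ccontr)
  let ?D = "{v\<in>{..<n}. deg T v = 3}"
  assume "\<not> ?thesis"
  then obtain S where "S \<subseteq> ?D" "card S = 3"
    using obtain_subset_with_card_n[of 3 ?D] by force
  then obtain u1 u2 u3 where u: "{u1, u2, u3} \<subseteq> ?D" "u1 \<noteq> u2" "u2 \<noteq> u3" "u1 \<noteq> u3"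
    by (auto simp: card_3_iff)
  have chemical: "chemical_tree n T" and k: "card (segments n T) = k"
    using assms(3) by (auto simp: CT_def)
  then have "(u2, u3) \<in> (adj T)\<^sup>*"
    using u(1) chemical_tree_connected by auto
  then obtain x y1 y2 where xy: "{x, y1, y2} \<subseteq> ?D" "x \<noteq> y1" "x \<noteq> y2" "y1 \<noteq> y2"
    and y12: "(y1, y2) \<in> (adj {e\<in>T. x \<notin> e})\<^sup>*"
    using reach_avoiding_one_of_two[of u2 u3 T u1] u by blast
  have "\<exists>b c. rerouting n T x y1 y2 b c"
    using xy by (intro rerouting_exists[OF chemical _ _ _ _ _ _ _ _ y12]) auto
  then obtain b c where "rerouting n T x y1 y2 b c" by blast
  then interpret rerouting n T x y1 y2 b c .
  have "T' \<in> CT n k"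
    using chemical_T' card_segments_T' k by (simp add: CT_def)
  then show False using assms(4) M1_less M2_less by fastforce
qed

end
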